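(* Assume the general single-user imperfect-prediction setting below. For $1\le\tau<\tau_n$ let $\tilde V^l(\tau)=V^l(\tau)$ and $\tilde V^u(\tau)=V^u(\tau)$, and for $\tau_n\le\tau\le\tau_n+D_n$ define $$\tilde V^l(\tau)=\max_{e\in\mathcal E,e>0}\Big\{-(1-p)\frac{1-[1-\zeta(i^{\min},e)]^{\tau-\tau_n}}{\zeta(i^{\min},e)}\lambda e+p\,\frac{1-[1-\zeta(i^{\min},e)]^{\tau}}{\zeta(i^{\min},e)}\big[-\lambda e+\zeta(i^{\min},e)\beta\big]\Big\},$$ $$\tilde V^u(\tau)=\sum_{z=\tau_n+1}^{\tau}\max_{e\in\mathcal E}\Big\{-\lambda e+\zeta(i^{\max},e)\big(p\beta-\max\{0,\tilde V^l(\tau_n),\tilde V^l(z-1)\}\big)\Big\}+p\sum_{z=1}^{\tau_n}\max_{e\in\mathcal E}\Big\{-\lambda e+\zeta(i^{\max},e)\big(\beta-\max\{0,V^l(z-1)\}\big)\Big\}.$$ Then for every state $i$ and every $1\le w\le D_n$, $$\max\{0,\tilde V^l(\tau_n),\tilde V^l(\tau_n+w)\}\le V^I(0,\tau_n+w,i)\le\min\{p\beta,\tilde V^u(\tau_n+w)\}.$$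
   Context: Setting: fix $\beta\ge0$, $\lambda\ge0$, $p\in(0,1]$, integers $\tau_n\ge1$, $D_n\ge1$. The channel is a Markov chain on $\{1,\dots,K\}$ with transition matrix $(P^{i,j})$; $\mathcal E\subset[0,\infty)$ is a finite set containing $0$ and a positive element; $\zeta(i,\cdot):\mathcal E\to[0,1]$ with $\zeta(i,0)=0$, $\zeta(i,e)>0$ for $e>0$, strictly increasing (restriction of a concave strictly increasing function). States are totally ordered by $\zeta$: for every $i,j$ either $\zeta(i,e)\ge\zeta(j,e)$ for all $e$ or $\le$ for all $e$; $i^{\max}$ ($i^{\min}$) is a state with $\zeta(i^{\max},e)\ge\zeta(i,e)$ ($\zeta(i^{\min},e)\le\zeta(i,e)$) for all $i,e$. Auxiliary functions: $V^l(0)=0$, $V^l(\tau)=\max_{e\in\mathcal E,e>0}\frac{1-[1-\zeta(i^{\min},e)]^{\tau}}{\zeta(i^{\min},e)}[-\lambda e+\zeta(i^{\min},e)\beta]$ for $\tau\ge1$; $V^u(0)=0$, $V^u(\tau)=\sum_{z=1}^{\tau}\max_{e\in\mathcal E}\{-\lambda e+\zeta(i^{\max},e)(\beta-\max\{0,V^l(z-1)\})\}$. Imperfect-prediction value function of a predicted packet (each prediction is correct with probability $p$, verified at its arrival time; $\tau$ = slots until deadline, deadline $\tau_n$ after arrival, window $D_n$): $V^I(0,0,i)=0$; $V^I(0,\tau,i)=\max_{e\in\mathcal E}\{-\lambda e+\zeta(i,e)\beta+(1-\zeta(i,e))\sum_jP^{i,j}V^I(0,\tau-1,j)\}$ for $1\le\tau\le\tau_n$;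 $V^I(0,\tau_n+1,i)=\max_{e\in\mathcal E}\{-\lambda e+\zeta(i,e)p\beta+p(1-\zeta(i,e))\sum_jP^{i,j}V^I(0,\tau_n,j)\}$; $V^I(0,\tau,i)=\max_{e\in\mathcal E}\{-\lambda e+\zeta(i,e)p\beta+(1-\zeta(i,e))\sum_jP^{i,j}V^I(0,\tau-1,j)\}$ for $\tau_n+2\le\tau\le\tau_n+D_n$. *)

theory Defs
  imports "HOL-Analysis.Analysis"
begin

text \<open>States form a finite type 'i; P is the transition matrix, E the finite energy set,
  zeta the success probability function, imin / imax extreme states.\<close>

definition setting ::
  "real \<Rightarrow> real \<Rightarrow> real \<Rightarrow> nat \<Rightarrow> nat \<Rightarrow> real set \<Rightarrow> ('i::finite \<Rightarrow> real \<Rightarrow> real)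
   \<Rightarrow> ('i \<Rightarrow> 'i \<Rightarrow> real) \<Rightarrow> 'i \<Rightarrow> 'i \<Rightarrow> bool" where
  "setting beta lam p taun Dn E zeta P imin imax \<longleftrightarrow>
     beta \<ge> 0 \<and> lam \<ge> 0 \<and> 0 < p \<and> p \<le> 1 \<and> taun \<ge> 1 \<and> Dn \<ge> 1 \<and>
     (\<forall>i j. P i j \<ge> 0) \<and> (\<forall>i. (\<Sum>j\<in>UNIV. P i j) = 1) \<and>
     finite E \<and> E \<subseteq> {0..} \<and> 0 \<in> E \<and> (\<exists>e\<in>E. e > 0) \<and>
     (\<forall>i. zeta i 0 = 0) \<and>
     (\<forall>i. \<forall>e\<in>E. 0 \<le> zeta i e \<and> zeta i e \<le> 1) \<and>
     (\<forall>i. \<forall>e\<in>E. e > 0 \<longrightarrow> zeta i e > 0) \<and>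
     (\<forall>i. \<forall>e1\<in>E. \<forall>e2\<in>E. e1 < e2 \<longrightarrow> zeta i e1 < zeta i e2) \<and>
     (\<forall>i. \<exists>g. concave_on {0..} g \<and> strict_mono_on {0..} g \<and> (\<forall>e\<in>E. zeta i e = g e)) \<and>
     (\<forall>i j. (\<forall>e\<in>E. zeta i e \<ge> zeta j e) \<or> (\<forall>e\<in>E. zeta i e \<le> zeta j e)) \<and>
     (\<forall>i. \<forall>e\<in>E. zeta imax e \<ge> zeta i e) \<and>
     (\<forall>i. \<forall>e\<in>E. zeta imin e \<le> zeta i e)"

definition Vl :: "real \<Rightarrow> real \<Rightarrow> real set \<Rightarrow> ('i \<Rightarrow> real \<Rightarrow> real) \<Rightarrow> 'i \<Rightarrow> nat \<Rightarrow> real" where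
  "Vl beta lam E zeta imin tau =
     (if tau = 0 then 0 else
      Max ((\<lambda>e. (1 - (1 - zeta imin e) ^ tau) / zeta imin e * (- lam * e + zeta imin e * beta))
            ` {e\<in>E. e > 0}))"

definition Vu :: "real \<Rightarrow> real \<Rightarrow> real set \<Rightarrow> ('i \<Rightarrow> real \<Rightarrow> real) \<Rightarrow> 'i \<Rightarrow> 'i \<Rightarrow> nat \<Rightarrow> real" where
  "Vu beta lam E zeta imin imax tau =
     (\<Sum>z=1..tau. Max ((\<lambda>e. - lam * e + zeta imax e * (beta - max 0 (Vl beta lam E zeta imin (z - 1)))) ` E))"

text \<open>Imperfect-prediction value function V^I(0,tau,i) (only meaningful for tau \<le> taun + Dn).\<close>
fun VI :: "real \<Rightarrow> real \<Rightarrow> real \<Rightarrow> nat \<Rightarrow> real set \<Rightarrow> ('i::finite \<Rightarrow> real \<Rightarrow> real)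
           \<Rightarrow> ('i \<Rightarrow> 'i \<Rightarrow> real) \<Rightarrow> nat \<Rightarrow> 'i \<Rightarrow> real" where
  "VI beta lam p taun E zeta P 0 i = 0"
| "VI beta lam p taun E zeta P (Suc t) i =
     (if Suc t \<le> taun then
        Max ((\<lambda>e. - lam * e + zeta i e * beta
                 + (1 - zeta i e) * (\<Sum>j\<in>UNIV. P i j * VI beta lam p taun E zeta P t j)) ` E)
      else if Suc t = taun + 1 then
        Max ((\<lambda>e. - lam * e + zeta i e * p * beta
                 + p * (1 - zeta i e) * (\<Sum>j\<in>UNIV. P i j * VI beta lam p taun E zeta P t j)) ` E)
      else
        Max ((\<lambda>e. - lam * e + zeta i e * p * beta
                 + (1 - zeta i e) * (\<Sum>j\<in>UNIV. P i j * VI beta lam p taun E zeta P t j)) ` E))"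

definition Vlt :: "real \<Rightarrow> real \<Rightarrow> real \<Rightarrow> nat \<Rightarrow> real set \<Rightarrow> ('i \<Rightarrow> real \<Rightarrow> real) \<Rightarrow> 'i \<Rightarrow> nat \<Rightarrow> real" where
  "Vlt beta lam p taun E zeta imin tau =
     (if tau < taun then Vl beta lam E zeta imin tau else
      Max ((\<lambda>e. - (1 - p) * ((1 - (1 - zeta imin e) ^ (tau - taun)) / zeta imin e) * lam * e
                 + p * ((1 - (1 - zeta imin e) ^ tau) / zeta imin e) * (- lam * e + zeta imin e * beta))
            ` {e\<in>E. e > 0}))"

definition Vut :: "real \<Rightarrow> real \<Rightarrow> real \<Rightarrow> nat \<Rightarrow> real set \<Rightarrow> ('i \<Rightarrow> real \<Rightarrow> real) \<Rightarrow> 'i \<Rightarrow> 'i \<Rightarrow> nat \<Rightarrow> real" where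
  "Vut beta lam p taun E zeta imin imax tau =
     (if tau < taun then Vu beta lam E zeta imin imax tau else
      (\<Sum>z=taun+1..tau. Max ((\<lambda>e. - lam * e + zeta imax e *
            (p * beta - max (max 0 (Vlt beta lam p taun E zeta imin taun))
                                (Vlt beta lam p taun E zeta imin (z - 1)))) ` E))
      + p * (\<Sum>z=1..taun. Max ((\<lambda>e. - lam * e + zeta imax e *
            (beta - max 0 (Vl beta lam E zeta imin (z - 1)))) ` E)))"

end

theory Submission
  imports Defs
begin

text \<open>For the lower bounds, V^I dominates the value of every fixed policy: transmitting with a
  constant energy e > 0 while the channel stays in its worst state imin gives exactly the
  terms maximised in V^l and in the modified lower bound, and idling (e = 0) carries a lower
  bound at the deadline time taun, discounted by p, to all later times. For the upper bounds,
  one Bellman step is bounded by raising the success probability to that of imax and bounding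
  the continuation below by the lower bounds and above by the induction hypothesis, which
  makes the bound additive over the slots.\<close>

lemma weighted_average_ge:
  fixes q f :: "'j \<Rightarrow> real"
  assumes "\<And>j. j \<in> I \<Longrightarrow> 0 \<le> q j" and "sum q I = 1" and "\<And>j. j \<in> I \<Longrightarrow> L \<le> f j"
  shows "L \<le> (\<Sum>j\<in>I. q j * f j)"
proof -
  have "(\<Sum>j\<in>I. q j * L) \<le> (\<Sum>j\<in>I. q j * f j)"
    using assms by (intro sum_mono mult_left_mono) auto
  then show ?thesis
    by (simp add: assms(2) flip: sum_distrib_right)
qed

lemma weighted_average_le:
  fixes q f :: "'j \<Rightarrow> real"
  assumes "\<And>j. j \<in> I \<Longrightarrow> 0 \<le> q j" and "sum q I = 1" and "\<And>j. j \<in> I \<Longrightarrow> f j \<le> U"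
  shows "(\<Sum>j\<in>I. q j * f j) \<le> U"
proof -
  have "(\<Sum>j\<in>I. q j * f j) \<le> (\<Sum>j\<in>I. q j * U)"
    using assms by (intro sum_mono mult_left_mono) auto
  then show ?thesis
    by (simp add: assms(2) flip: sum_distrib_right)
qed

definition bellman_step ::
  "real set \<Rightarrow> real \<Rightarrow> (real \<Rightarrow> real) \<Rightarrow> real \<Rightarrow> real \<Rightarrow> real" where
  "bellman_step E lam s r c = Max ((\<lambda>e. - lam * e + s e * r + (1 - s e) * c) ` E)"

lemma bellman_step_ge:
  assumes "finite E" and "e \<in> E" and "z \<le> s e" and "z \<le> 1" and "L \<le> c" and "c \<le> r"
  shows "- lam * e + z * r + (1 - z) * L \<le> bellman_step E lam s r c"
proof -
  have "z * (r - c) \<le> s e * (r - c)"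
    using assms by (intro mult_right_mono) auto
  moreover have "(1 - z) * L \<le> (1 - z) * c"
    using assms by (intro mult_left_mono) auto
  ultimately have "- lam * e + z * r + (1 - z) * L \<le> - lam * e + s e * r + (1 - s e) * c"
    by (simp add: algebra_simps)
  also have "\<dots> \<le> bellman_step E lam s r c"
    unfolding bellman_step_def using assms(1,2) by (intro Max_ge) auto
  finally show ?thesis .
qed

lemma bellman_step_le_cap:
  assumes "finite E" and "E \<noteq> {}" and "0 \<le> lam"
    and "\<And>e. e \<in> E \<Longrightarrow> 0 \<le> e \<and> s e \<le> 1" and "c \<le> r"
  shows "bellman_step E lam s r c \<le> r"
  unfolding bellman_step_def
proof (rule Max.boundedI)
  fix x assume "x \<in> (\<lambda>e. - lam * e + s e * r + (1 - s e) * c) ` E"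
  then obtain e where e: "e \<in> E" and x: "x = - lam * e + s e * r + (1 - s e) * c"
    by blast
  have "(1 - s e) * c \<le> (1 - s e) * r"
    using assms(4,5) e by (intro mult_left_mono) auto
  moreover have "0 \<le> lam * e"
    using assms(3,4) e by simp
  ultimately show "x \<le> r"
    unfolding x by (simp add: algebra_simps)
qed (use assms(1,2) in auto)

lemma bellman_step_le:
  assumes "finite E" and "E \<noteq> {}"
    and "\<And>e. e \<in> E \<Longrightarrow> 0 \<le> s e \<and> s e \<le> s' e"
    and "L \<le> c" and "c \<le> r" and "c \<le> U"
  shows "bellman_step E lam s r c \<le> Max ((\<lambda>e. - lam * e + s' e * (r - L)) ` E) + U"
  unfolding bellman_step_def
proof (rule Max.boundedI)
  fix x assume "x \<in> (\<lambda>e. - lam * e + s e * r + (1 - s e) * c) ` E"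
  then obtain e where e: "e \<in> E" and x: "x = - lam * e + s e * r + (1 - s e) * c"
    by blast
  have "s e * (r - c) \<le> s e * (r - L)"
    using assms(3,4) e by (intro mult_left_mono) auto
  moreover have "s e * (r - L) \<le> s' e * (r - L)"
    using assms(3-5) e by (intro mult_right_mono) auto
  moreover have "- lam * e + s' e * (r - L) \<le> Max ((\<lambda>e. - lam * e + s' e * (r - L)) ` E)"
    using assms(1) e by (intro Max_ge) auto
  ultimately show "x \<le> Max ((\<lambda>e. - lam * e + s' e * (r - L)) ` E) + U"
    unfolding x using assms(6) by (simp add: algebra_simps)
qed (use assms(1,2) in auto)

locale imperfect_prediction =
  fixes beta lam p :: real and taun Dn :: nat and E :: "real set"
    and zeta :: "'i::finite \<Rightarrow> real \<Rightarrow> real" and P :: "'i \<Rightarrow> 'i \<Rightarrow> real"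
    and imin imax :: 'i
  assumes setting: "setting beta lam p taun Dn E zeta P imin imax"
begin

lemma beta_nonneg: "0 \<le> beta"
  and lam_nonneg: "0 \<le> lam"
  and p_pos: "0 < p"
  and P_nonneg: "0 \<le> P i j"
  and P_row_sum: "sum (P i) UNIV = 1"
  and finite_E: "finite E"
  and E_nonneg: "e \<in> E \<Longrightarrow> 0 \<le> e"
  and zero_in_E: "0 \<in> E"
  and positive_energy: "\<exists>e\<in>E. 0 < e"
  and zeta_zero: "zeta i 0 = 0"
  and zeta_nonneg: "e \<in> E \<Longrightarrow> 0 \<le> zeta i e"
  and zeta_le_one: "e \<in> E \<Longrightarrow> zeta i e \<le> 1"
  and zeta_pos: "e \<in> E \<Longrightarrow> 0 < e \<Longrightarrow> 0 < zeta i e"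
  and zeta_le_imax: "e \<in> E \<Longrightarrow> zeta i e \<le> zeta imax e"
  and zeta_imin_le: "e \<in> E \<Longrightarrow> zeta imin e \<le> zeta i e"
  using setting unfolding setting_def by auto

abbreviation V :: "nat \<Rightarrow> 'i \<Rightarrow> real" where
  "V \<equiv> VI beta lam p taun E zeta P"

text \<open>The middle case of VI: in the step from taun to taun + 1 slots before the deadline, the
  slot in which the prediction is verified, the future value counts only with probability p.\<close>

definition arrival_weight :: "nat \<Rightarrow> real" where
  "arrival_weight t = (if t = taun then p else 1)"

definition value_cap :: "nat \<Rightarrow> real" where
  "value_cap t = (if t \<le> taun then beta else p * beta)"

definition continuation :: "nat \<Rightarrow> 'i \<Rightarrow> real" where
  "continuation t i = (\<Sum>j\<in>UNIV. P i j * (arrival_weight t * V t j))"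

lemma arrival_weight_nonneg: "0 \<le> arrival_weight t"
  using p_pos by (simp add: arrival_weight_def)

lemma arrival_weight_after: "taun < t \<Longrightarrow> arrival_weight t = 1"
  by (simp add: arrival_weight_def)

lemma arrival_weight_value_cap: "arrival_weight t * value_cap t = value_cap (Suc t)"
  by (simp add: arrival_weight_def value_cap_def)

lemma VI_Suc: "V (Suc t) i = bellman_step E lam (zeta i) (value_cap (Suc t)) (continuation t i)"
proof -
  have "continuation t i = arrival_weight t * (\<Sum>j\<in>UNIV. P i j * V t j)"
    by (simp add: continuation_def sum_distrib_left mult.left_commute)
  then show ?thesis
    by (simp add: bellman_step_def value_cap_def arrival_weight_def algebra_simps)
qed

lemma continuation_ge: "(\<And>j. L \<le> arrival_weight t * V t j) \<Longrightarrow> L \<le> continuation t i"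
  unfolding continuation_def by (rule weighted_average_ge) (use P_nonneg P_row_sum in auto)

lemma continuation_le: "(\<And>j. arrival_weight t * V t j \<le> U) \<Longrightarrow> continuation t i \<le> U"
  unfolding continuation_def by (rule weighted_average_le) (use P_nonneg P_row_sum in auto)

lemma V_le_value_cap: "V t i \<le> value_cap t"
proof (induction t arbitrary: i)
  case 0
  show ?case using beta_nonneg by (simp add: value_cap_def)
next
  case (Suc t)
  have "continuation t i \<le> value_cap (Suc t)"
    by (rule continuation_le)
      (use Suc arrival_weight_nonneg in \<open>auto simp flip: arrival_weight_value_cap intro: mult_left_mono\<close>)
  then show ?case
    unfolding VI_Suc
    by (intro bellman_step_le_cap) (use finite_E zero_in_E lam_nonneg E_nonneg zeta_le_one in auto)
qed

lemma continuation_le_value_cap: "continuation t i \<le> value_cap (Suc t)"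
  by (rule continuation_le)
    (use V_le_value_cap arrival_weight_nonneg in \<open>auto simp flip: arrival_weight_value_cap intro: mult_left_mono\<close>)

lemma continuation_le_V_Suc: "continuation t i \<le> V (Suc t) i"
  unfolding VI_Suc
  using bellman_step_ge[OF finite_E zero_in_E, where z = 0 and s = "zeta i" and lam = lam
      and L = "continuation t i" and c = "continuation t i" and r = "value_cap (Suc t)"]
    continuation_le_value_cap zeta_zero
  by simp

lemma V_nonneg: "0 \<le> V t i"
proof (induction t arbitrary: i)
  case (Suc t)
  have "0 \<le> continuation t i"
    by (rule continuation_ge) (use Suc arrival_weight_nonneg in simp)
  then show ?case using continuation_le_V_Suc order_trans by blast
qed simp

text \<open>Value of transmitting with the fixed energy e in every slot while the channel stays in
  its worst state imin; for t > taun the term with factor 1 - p is the energy spent before the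
  predicted arrival when the prediction is wrong.\<close>

definition fixed_energy_value :: "real \<Rightarrow> nat \<Rightarrow> real" where
  "fixed_energy_value e t =
     (if t \<le> taun then (1 - (1 - zeta imin e) ^ t) / zeta imin e * (- lam * e + zeta imin e * beta)
      else - (1 - p) * ((1 - (1 - zeta imin e) ^ (t - taun)) / zeta imin e) * lam * e
           + p * ((1 - (1 - zeta imin e) ^ t) / zeta imin e) * (- lam * e + zeta imin e * beta))"

lemma fixed_energy_value_Suc:
  assumes "e \<in> E" and "0 < e"
  shows "fixed_energy_value e (Suc t) = - lam * e + zeta imin e * value_cap (Suc t)
           + (1 - zeta imin e) * (arrival_weight t * fixed_energy_value e t)"
proof -
  define z where "z = zeta imin e"
  define A where "A n = (1 - (1 - z) ^ n) / z" for n
  have A_Suc: "A (Suc n) = 1 + (1 - z) * A n" for n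
    unfolding A_def z_def using zeta_pos[OF assms, where i = imin] by (simp add: field_simps)
  have A_0: "A 0 = 0"
    by (simp add: A_def)
  have fixed: "fixed_energy_value e n =
      (if n \<le> taun then A n * (- lam * e + z * beta)
       else - (1 - p) * A (n - taun) * lam * e + p * A n * (- lam * e + z * beta))" for n
    by (simp add: fixed_energy_value_def A_def z_def)
  consider "t < taun" | "t = taun" | "taun < t" by linarith
  then show ?thesis
  proof cases
    case 3
    then have "Suc t - taun = Suc (t - taun)" by simp
    with 3 show ?thesis
      by (simp add: fixed A_Suc value_cap_def arrival_weight_def flip: z_def) (simp add: algebra_simps)
  qed (simp_all add: fixed A_Suc A_0 value_cap_def arrival_weight_def algebra_simps flip: z_def)
qed

lemma fixed_energy_value_le_V:
  assumes "e \<in> E" and "0 < e"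
  shows "fixed_energy_value e t \<le> V t i"
proof (induction t arbitrary: i)
  case 0
  show ?case by (simp add: fixed_energy_value_def)
next
  case (Suc t)
  have "arrival_weight t * fixed_energy_value e t \<le> continuation t i"
    by (rule continuation_ge) (use Suc arrival_weight_nonneg in \<open>auto intro: mult_left_mono\<close>)
  then show ?case
    unfolding fixed_energy_value_Suc[OF assms] VI_Suc
    by (intro bellman_step_ge)
      (use finite_E assms zeta_imin_le zeta_le_one continuation_le_value_cap in auto)
qed

lemma Vl_eq_Max_fixed_energy_value:
  assumes "1 \<le> t" and "t \<le> taun"
  shows "Vl beta lam E zeta imin t = Max ((\<lambda>e. fixed_energy_value e t) ` {e\<in>E. 0 < e})"
  using assms by (simp add: Vl_def fixed_energy_value_def)

lemma Vlt_eq_Max_fixed_energy_value: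
  assumes "taun \<le> t"
  shows "Vlt beta lam p taun E zeta imin t
           = Max ((\<lambda>e. arrival_weight t * fixed_energy_value e t) ` {e\<in>E. 0 < e})"
  using assms by (cases "t = taun") (simp_all add: Vlt_def fixed_energy_value_def arrival_weight_def mult.assoc)

lemma Max_positive_energies_le:
  assumes "\<And>e. e \<in> E \<Longrightarrow> 0 < e \<Longrightarrow> f e \<le> x"
  shows "Max (f ` {e\<in>E. 0 < e}) \<le> x"
  using assms finite_E positive_energy by (intro Max.boundedI) auto

lemma Vl_le_V:
  assumes "t \<le> taun"
  shows "Vl beta lam E zeta imin t \<le> V t i"
proof (cases "t = 0")
  case True
  then show ?thesis by (simp add: Vl_def)
next
  case False
  with assms have "Vl beta lam E zeta imin t = Max ((\<lambda>e. fixed_energy_value e t) ` {e\<in>E. 0 < e})"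
    by (intro Vl_eq_Max_fixed_energy_value) auto
  also have "\<dots> \<le> V t i"
    by (rule Max_positive_energies_le) (rule fixed_energy_value_le_V)
  finally show ?thesis .
qed

lemma Vlt_le_V: "taun \<le> t \<Longrightarrow> Vlt beta lam p taun E zeta imin t \<le> arrival_weight t * V t i"
  unfolding Vlt_eq_Max_fixed_energy_value
  using fixed_energy_value_le_V arrival_weight_nonneg
  by (auto intro!: Max_positive_energies_le mult_left_mono)

lemma Vlt_taun_le_V:
  assumes "taun < t"
  shows "Vlt beta lam p taun E zeta imin taun \<le> V t i"
proof -
  from assms have "Suc taun \<le> t" by simp
  then show ?thesis
  proof (induction t arbitrary: i rule: dec_induct)
    case base
    have "Vlt beta lam p taun E zeta imin taun \<le> continuation taun i"
      by (rule continuation_ge) (rule Vlt_le_V, simp)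
    then show ?case using continuation_le_V_Suc order_trans by blast
  next
    case (step t)
    have "Vlt beta lam p taun E zeta imin taun \<le> continuation t i"
      by (rule continuation_ge) (use step in \<open>simp add: arrival_weight_def\<close>)
    then show ?case using continuation_le_V_Suc order_trans by blast
  qed
qed

abbreviation lower_envelope :: "nat \<Rightarrow> real" where
  "lower_envelope t \<equiv> max (max 0 (Vlt beta lam p taun E zeta imin taun)) (Vlt beta lam p taun E zeta imin t)"

lemma lower_envelope_le_V:
  assumes "taun \<le> t"
  shows "lower_envelope t \<le> arrival_weight t * V t i"
proof (cases "t = taun")
  case True
  then show ?thesis
    using Vlt_le_V[of taun i] V_nonneg[of taun i] p_pos by (simp add: arrival_weight_def)
next
  case False
  with assms have "taun < t" by simp
  then show ?thesis
    using Vlt_le_V[OF assms, of i] Vlt_taun_le_V[of t i] V_nonneg[of t i]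
    by (simp add: arrival_weight_def)
qed

lemma Vu_Suc:
  "Vu beta lam E zeta imin imax (Suc t) = Vu beta lam E zeta imin imax t
     + Max ((\<lambda>e. - lam * e + zeta imax e * (beta - max 0 (Vl beta lam E zeta imin t))) ` E)"
  by (simp add: Vu_def)

lemma Vut_taun: "Vut beta lam p taun E zeta imin imax taun = p * Vu beta lam E zeta imin imax taun"
  by (simp add: Vut_def Vu_def)

lemma Vut_Suc:
  assumes "taun \<le> t"
  shows "Vut beta lam p taun E zeta imin imax (Suc t) = Vut beta lam p taun E zeta imin imax t
     + Max ((\<lambda>e. - lam * e + zeta imax e * (p * beta - lower_envelope t)) ` E)"
  using assms by (simp add: Vut_def)

lemma V_le_Vu: "t \<le> taun \<Longrightarrow> V t i \<le> Vu beta lam E zeta imin imax t"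
proof (induction t arbitrary: i)
  case 0
  show ?case by (simp add: Vu_def)
next
  case (Suc t)
  have lower: "max 0 (Vl beta lam E zeta imin t) \<le> continuation t i"
    by (rule continuation_ge) (use Suc.prems Vl_le_V V_nonneg in \<open>simp add: arrival_weight_def\<close>)
  have upper: "continuation t i \<le> Vu beta lam E zeta imin imax t"
    by (rule continuation_le) (use Suc in \<open>simp add: arrival_weight_def\<close>)
  have "V (Suc t) i \<le> Max ((\<lambda>e. - lam * e + zeta imax e
      * (value_cap (Suc t) - max 0 (Vl beta lam E zeta imin t))) ` E) + Vu beta lam E zeta imin imax t"
    unfolding VI_Suc
    by (rule bellman_step_le[OF finite_E _ _ lower continuation_le_value_cap upper])
      (use zero_in_E zeta_nonneg zeta_le_imax in auto)
  then show ?case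
    using Suc.prems by (simp add: Vu_Suc value_cap_def add.commute)
qed

lemma V_le_Vut:
  assumes "taun \<le> t"
  shows "arrival_weight t * V t i \<le> Vut beta lam p taun E zeta imin imax t"
  using assms
proof (induction t arbitrary: i rule: dec_induct)
  case base
  show ?case
    using V_le_Vu[of taun i] p_pos by (simp add: arrival_weight_def Vut_taun)
next
  case (step t)
  have lower: "lower_envelope t \<le> continuation t i"
    by (rule continuation_ge) (rule lower_envelope_le_V[OF step.hyps(1)])
  have upper: "continuation t i \<le> Vut beta lam p taun E zeta imin imax t"
    by (rule continuation_le) (rule step.IH)
  have "V (Suc t) i \<le> Max ((\<lambda>e. - lam * e + zeta imax e
      * (value_cap (Suc t) - lower_envelope t)) ` E) + Vut beta lam p taun E zeta imin imax t"
    unfolding VI_Suc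
    by (rule bellman_step_le[OF finite_E _ _ lower continuation_le_value_cap upper])
      (use zero_in_E zeta_nonneg zeta_le_imax in auto)
  then show ?case
    using step.hyps(1) by (simp add: Vut_Suc value_cap_def arrival_weight_after add.commute)
qed

lemma bounds_after_arrival:
  assumes "taun < t"
  shows "lower_envelope t \<le> V t i \<and> V t i \<le> min (p * beta) (Vut beta lam p taun E zeta imin imax t)"
  using lower_envelope_le_V[of t i] V_le_Vut[of t i] V_le_value_cap[of t i] assms
  by (simp add: arrival_weight_after value_cap_def)

end

theorem theorem9:
  fixes beta lam p :: real and taun Dn w :: nat and E :: "real set"
    and zeta :: "'i::finite \<Rightarrow> real \<Rightarrow> real" and P :: "'i \<Rightarrow> 'i \<Rightarrow> real"
    and imin imax i :: 'i
  assumes "setting beta lam p taun Dn E zeta P imin imax"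
    and "1 \<le> w" and "w \<le> Dn"
  shows "max (max 0 (Vlt beta lam p taun E zeta imin taun)) (Vlt beta lam p taun E zeta imin (taun + w))
           \<le> VI beta lam p taun E zeta P (taun + w) i
         \<and> VI beta lam p taun E zeta P (taun + w) i
           \<le> min (p * beta) (Vut beta lam p taun E zeta imin imax (taun + w))"
proof -
  interpret imperfect_prediction beta lam p taun Dn E zeta P imin imax
    by (rule imperfect_prediction.intro) (fact assms(1))
  \<comment> \<open>VI continues its last recursion beyond the window.\<close>
  show ?thesis
    using bounds_after_arrival[of "taun + w" i] assms(2) by simp
qed

end
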